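(* Let $d=\mu_+-\mu_->0$. For every $\epsilon\in\left[0,\frac{d}{2}\right]$ and every $K\in\left(1,B_K(\epsilon)\right]$, where $$B_K(\epsilon)=\min\left\{\exp\!\left(\frac{(d-2\epsilon)^2}{2}\right),\ \frac{d}{\epsilon}-1\right\}$$ (with $d/\epsilon:=+\infty$ when $\epsilon=0$), the optimal fair, natural and robust thresholds satisfy $$\mu_-+\epsilon\;\le\;\theta_{\mathrm f}\;\le\;\theta^*\;\le\;\theta^{(\epsilon)}_{\mathrm r}\;\le\;\mu_+-\epsilon .$$ Moreover, for fixed $\mu_\pm$ and $K$, the map $\epsilon\mapsto\theta^{(\epsilon)}_{\mathrm r}$ is increasing on the set of $\epsilon\in\left[0,\frac d2\right]$ for which $K\le B_K(\epsilon)$.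
   Context: Setting (one-dimensional Gaussian mixture). Fix real numbers $\mu_-<\mu_+$ and $K>1$, and let $d=\mu_+-\mu_-$. Let $(X,Y)$ be a random pair with $\Pr(Y=1)=\Pr(Y=-1)=\tfrac12$, $X\mid Y=-1\sim\mathcal N(\mu_-,1)$, and $X\mid Y=1\sim\mathcal N(\mu_+,K^2)$ ($K^2$ is the variance). For $\theta\in\mathbb R$, the threshold classifier $f_\theta$ is given by $f_\theta(x)=1$ if $x>\theta$ and $f_\theta(x)=-1$ otherwise. The class-conditional error rates are $e_+(\theta)=\Pr(f_\theta(X)\ne 1\mid Y=1)=\Pr(X\le\theta\mid Y=1)$ and $e_-(\theta)=\Pr(f_\theta(X)\ne -1\mid Y=-1)=\Pr(X>\theta\mid Y=-1)$. The natural error is $R_{\mathrm{nat}}(\theta)=\Pr(f_\theta(X)\ne Y)=\tfrac12 e_+(\theta)+\tfrac12 e_-(\theta)$. For $\epsilon\ge 0$, the robust error is $R_{\mathrm{rob}}^{\epsilon}(\theta)=\Pr(\exists\tau,\ |\tau|\le\epsilon,\ f_\theta(X+\tau)\ne Y)=\tfrac12\Pr(X\le\theta+\epsilon\mid Y=1)+\tfrac12\Pr(X>\theta-\epsilon\mid Y=-1)$. Optimal models (all thresholds restricted to $[\mu_-,\mu_+]$): $\theta^*$ is the minimizer of $R_{\mathrm{nat}}$ over $[\mu_-,\mu_+]$ (the Bayes/natural classifier); $\theta_{\mathrm f}$ is the threshold in $[\mu_-,\mu_+]$ at which the class-conditional errors are equal, $e_+(\theta_{\mathrm f})=e_-(\theta_{\mathrm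 f})$ (the optimal accuracy-parity fair classifier, i.e. the lexicographic minimizer of first $|e_+(\theta)-e_-(\theta)|$ and then $R_{\mathrm{nat}}(\theta)$); $\theta^{(\epsilon)}_{\mathrm r}$ is the minimizer of $R^{\epsilon}_{\mathrm{rob}}$ over $[\mu_-,\mu_+]$ (the optimal robust classifier). *)

theory Defs
  imports "HOL-Probability.Probability"
begin

text \<open>Class-conditional laws: X | Y=-1 ~ N(mu_m, 1), X | Y=1 ~ N(mu_p, K^2)
  (normal_density m s has standard deviation s).\<close>

definition law_pos :: "real \<Rightarrow> real \<Rightarrow> real measure" where
  "law_pos mu_p K = density lborel (normal_density mu_p K)"

definition law_neg :: "real \<Rightarrow> real measure" where
  "law_neg mu_m = density lborel (normal_density mu_m 1)"

definition e_pos :: "real \<Rightarrow> real \<Rightarrow> real \<Rightarrow> real" where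
  "e_pos mu_p K theta = measure (law_pos mu_p K) {..theta}"

definition e_neg :: "real \<Rightarrow> real \<Rightarrow> real" where
  "e_neg mu_m theta = measure (law_neg mu_m) {theta<..}"

definition R_nat :: "real \<Rightarrow> real \<Rightarrow> real \<Rightarrow> real \<Rightarrow> real" where
  "R_nat mu_m mu_p K theta = e_pos mu_p K theta / 2 + e_neg mu_m theta / 2"

definition R_rob :: "real \<Rightarrow> real \<Rightarrow> real \<Rightarrow> real \<Rightarrow> real \<Rightarrow> real" where
  "R_rob mu_m mu_p K eps theta =
     measure (law_pos mu_p K) {..theta + eps} / 2 + measure (law_neg mu_m) {theta - eps<..} / 2"

definition is_minimizer_on :: "(real \<Rightarrow> real) \<Rightarrow> real set \<Rightarrow> real \<Rightarrow> bool" where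
  "is_minimizer_on f S x \<longleftrightarrow> x \<in> S \<and> (\<forall>y\<in>S. f x \<le> f y)"

definition B_K :: "real \<Rightarrow> real \<Rightarrow> real \<Rightarrow> real" where
  "B_K mu_m mu_p eps =
     (if eps = 0 then exp (((mu_p - mu_m) - 2 * eps)^2 / 2)
      else min (exp (((mu_p - mu_m) - 2 * eps)^2 / 2)) ((mu_p - mu_m) / eps - 1))"

end

theory Submission
  imports Defs
begin

text \<open>With \<Phi> the standard normal distribution function, the robust risk is
  \<open>R\<^sub>\<epsilon>(\<theta>) = (\<Phi>((\<theta> + \<epsilon> - \<mu>\<^sub>+) / K) + \<Phi>(\<mu>\<^sub>- + \<epsilon> - \<theta>)) / 2\<close>, and the natural risk is \<open>R\<^sub>0\<close>.
  The derivative of \<open>R\<^sub>\<epsilon>\<close> has the sign of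
  \<open>H\<^sub>\<epsilon>(\<theta>) = (\<theta> - \<epsilon> - \<mu>\<^sub>-)\<^sup>2 - (\<theta> + \<epsilon> - \<mu>\<^sub>+)\<^sup>2 / K\<^sup>2 - 2 ln K\<close>, twice the logarithm of the
  ratio of its two Gaussian terms. The bound \<open>K \<le> d/\<epsilon> - 1\<close> makes \<open>H\<^sub>\<epsilon>\<close> negative left of
  \<open>\<mu>\<^sub>- + \<epsilon>\<close>, the bound \<open>K \<le> exp((d - 2\<epsilon>)\<^sup>2/2)\<close> makes it positive right of \<open>\<mu>\<^sub>+ - \<epsilon>\<close>, and it
  increases strictly in between. So \<open>H\<^sub>\<epsilon>\<close> changes sign exactly once on \<open>[\<mu>\<^sub>-, \<mu>\<^sub>+]\<close>, and
  \<open>R\<^sub>\<epsilon>\<close> has a unique minimiser there, namely the root of \<open>H\<^sub>\<epsilon>\<close>. Expanding \<open>H\<^sub>\<epsilon>\<^sub>'\<close> around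
  that root shows \<open>H\<^sub>\<epsilon>\<^sub>'\<close> is positive there for \<open>\<epsilon>' < \<epsilon>\<close>, which gives monotonicity in \<open>\<epsilon>\<close>.
  Equal error rates mean \<open>\<theta> - \<mu>\<^sub>+ = K (\<mu>\<^sub>- - \<theta>)\<close>, i.e. \<open>\<theta>\<^sub>f = \<mu>\<^sub>- + d / (1 + K)\<close>, where
  \<open>H\<^sub>0(\<theta>\<^sub>f) = -2 ln K < 0\<close>; hence \<open>\<theta>\<^sub>f\<close> lies left of the natural threshold.\<close>

definition std_normal_cdf :: "real \<Rightarrow> real" where
  "std_normal_cdf t = (\<integral>x. std_normal_density x * indicator {..t} x \<partial>lborel)"

lemma measure_density_normal:
  assumes "0 < s" and [measurable]: "A \<in> sets borel"
  shows "measure (density lborel (normal_density \<mu> s)) A = (\<integral>x. normal_density \<mu> s x * indicator A x \<partial>lborel)"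
proof -
  have "emeasure (density lborel (normal_density \<mu> s)) A = (\<integral>\<^sup>+ x. ennreal (normal_density \<mu> s x * indicator A x) \<partial>lborel)"
    by (subst emeasure_density) (auto intro!: nn_integral_cong simp: indicator_def)
  also have "\<dots> = ennreal (\<integral>x. normal_density \<mu> s x * indicator A x \<partial>lborel)"
    using assms by (intro nn_integral_eq_integral integrable_real_mult_indicator) auto
  finally show ?thesis unfolding measure_def by simp
qed

lemma normal_density_affine:
  assumes "s \<noteq> 0"
  shows "\<bar>s\<bar> * normal_density \<mu> \<bar>s\<bar> (\<mu> + s * x) = std_normal_density x"
  using assms by (simp add: normal_density_def field_simps real_sqrt_mult power2_eq_square)

lemma measure_normal_atMost:
  assumes "0 < s"
  shows "measure (density lborel (normal_density \<mu> s)) {..t} = std_normal_cdf ((t - \<mu>) / s)"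
proof -
  have "measure (density lborel (normal_density \<mu> s)) {..t} = (\<integral>x. normal_density \<mu> s x * indicator {..t} x \<partial>lborel)"
    using assms by (simp add: measure_density_normal)
  also have "\<dots> = \<bar>s\<bar> *\<^sub>R (\<integral>x. normal_density \<mu> s (\<mu> + s * x) * indicator {..t} (\<mu> + s * x) \<partial>lborel)"
    by (rule lborel_integral_real_affine) (use assms in auto)
  also have "\<dots> = (\<integral>x. std_normal_density x * indicator {..(t - \<mu>)/s} x \<partial>lborel)"
  proof -
    have "\<bar>s\<bar> * (normal_density \<mu> s (\<mu> + s * x) * indicator {..t} (\<mu> + s * x))
        = std_normal_density x * indicator {..(t - \<mu>)/s} x" for x
    proof -
      have "\<mu> + s * x \<le> t \<longleftrightarrow> x \<le> (t - \<mu>) / s"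
        using assms by (simp add: pos_le_divide_eq algebra_simps)
      then show ?thesis
        using assms normal_density_affine[of s \<mu> x] by (simp add: indicator_def)
    qed
    then show ?thesis by (simp flip: integral_mult_right_zero)
  qed
  finally show ?thesis unfolding std_normal_cdf_def .
qed

lemma measure_normal_greaterThan:
  assumes "0 < s"
  shows "measure (density lborel (normal_density \<mu> s)) {t<..} = std_normal_cdf ((\<mu> - t) / s)"
proof -
  have "measure (density lborel (normal_density \<mu> s)) {t<..} = (\<integral>x. normal_density \<mu> s x * indicator {t<..} x \<partial>lborel)"
    using assms by (simp add: measure_density_normal)
  also have "\<dots> = \<bar>-s\<bar> *\<^sub>R (\<integral>x. normal_density \<mu> s (\<mu> + (-s) * x) * indicator {t<..} (\<mu> + (-s) * x) \<partial>lborel)"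
    by (rule lborel_integral_real_affine) (use assms in auto)
  also have "\<dots> = (\<integral>x. std_normal_density x * indicator {..<(\<mu> - t)/s} x \<partial>lborel)"
  proof -
    have "\<bar>-s\<bar> * (normal_density \<mu> s (\<mu> + (-s) * x) * indicator {t<..} (\<mu> + (-s) * x))
        = std_normal_density x * indicator {..<(\<mu> - t)/s} x" for x
    proof -
      have "t < \<mu> + (-s) * x \<longleftrightarrow> x < (\<mu> - t) / s"
        using assms by (simp add: pos_less_divide_eq algebra_simps)
      then show ?thesis
        using assms normal_density_affine[of "-s" \<mu> x] by (simp add: indicator_def)
    qed
    then show ?thesis by (simp flip: integral_mult_right_zero)
  qed
  also have "\<dots> = (\<integral>x. std_normal_density x * indicator {..(\<mu> - t)/s} x \<partial>lborel)"
  proof (rule integral_cong_AE)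
    show "AE x in lborel. std_normal_density x * indicator {..<(\<mu> - t)/s} x
                        = std_normal_density x * indicator {..(\<mu> - t)/s} x"
      by (rule AE_mp[OF AE_lborel_singleton[of "(\<mu> - t)/s"]]) (simp add: indicator_def)
  qed simp_all
  finally show ?thesis unfolding std_normal_cdf_def .
qed

lemma std_normal_cdf_split:
  assumes "a \<le> u"
  shows "std_normal_cdf u = std_normal_cdf a + integral {a..u} std_normal_density"
proof -
  have "std_normal_cdf u = (\<integral>x. std_normal_density x * indicator {..a} x
                              + std_normal_density x * indicator {a..u} x \<partial>lborel)"
    unfolding std_normal_cdf_def
  proof (rule integral_cong_AE)
    show "AE x in lborel. std_normal_density x * indicator {..u} x
        = std_normal_density x * indicator {..a} x + std_normal_density x * indicator {a..u} x"
      by (rule AE_mp[OF AE_lborel_singleton[of a]]) (use assms in \<open>simp add: indicator_def\<close>)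
  qed simp_all
  also have "\<dots> = std_normal_cdf a + (\<integral>x. std_normal_density x * indicator {a..u} x \<partial>lborel)"
    unfolding std_normal_cdf_def by (intro Bochner_Integration.integral_add integrable_real_mult_indicator) auto
  also have "(\<integral>x. std_normal_density x * indicator {a..u} x \<partial>lborel) = integral {a..u} std_normal_density"
  proof -
    have "set_integrable lborel {a..u} std_normal_density"
      unfolding set_integrable_def
      by (rule integrable_mult_indicator[where f=std_normal_density, simplified mult.commute]) auto
    then have "(LINT x:{a..u}|lborel. std_normal_density x) = integral {a..u} std_normal_density"
      by (rule set_borel_integral_eq_integral(2))
    then show ?thesis by (simp add: set_lebesgue_integral_def mult.commute)
  qed
  finally show ?thesis .
qed

lemma std_normal_cdf_has_real_derivative:
  "(std_normal_cdf has_real_derivative std_normal_density x) (at x)"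
proof -
  let ?F = "\<lambda>u. std_normal_cdf (x - 1) + integral {x - 1..u} std_normal_density"
  have "continuous_on {x - 1..x + 1} std_normal_density"
    unfolding normal_density_def by (intro continuous_intros) auto
  then have "(?F has_real_derivative std_normal_density x) (at x within {x - 1..x + 1})"
    by (intro DERIV_add[where D=0, simplified] DERIV_const integral_has_real_derivative) auto
  then have "(?F has_real_derivative std_normal_density x) (at x)"
    by (simp add: at_within_Icc_at)
  then show ?thesis
    by (rule has_field_derivative_transform_within_open[of _ _ _ "{x - 1<..<x + 1}"])
       (auto intro!: std_normal_cdf_split[symmetric])
qed

lemma std_normal_cdf_strict_mono: "strict_mono std_normal_cdf"
proof (rule strict_monoI)
  fix x y :: real
  assume "x < y"
  then show "std_normal_cdf x < std_normal_cdf y"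
    by (rule DERIV_pos_imp_increasing)
       (metis std_normal_cdf_has_real_derivative normal_density_pos zero_less_one)
qed

locale gaussian_mixture =
  fixes m p K :: real
  assumes means_less: "m < p" and K_gt_1: "1 < K"
begin

lemma K_pos: "0 < K"
  using K_gt_1 by simp

lemma ln_K_pos: "0 < ln K"
  using K_gt_1 by simp

definition risk :: "real \<Rightarrow> real \<Rightarrow> real" where
  "risk e t = std_normal_cdf ((t + e - p) / K) / 2 + std_normal_cdf (m + e - t) / 2"

definition log_ratio :: "real \<Rightarrow> real \<Rightarrow> real" where
  "log_ratio e t = (t - e - m)\<^sup>2 - (t + e - p)\<^sup>2 / K\<^sup>2 - 2 * ln K"

text \<open>The hypotheses of the theorem on \<open>\<epsilon>\<close>, with \<open>K \<le> d/\<epsilon> - 1\<close> cleared of the division.\<close>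
definition admissible :: "real \<Rightarrow> bool" where
  "admissible e \<longleftrightarrow> 0 \<le> e \<and> e \<le> (p - m) / 2 \<and> K \<le> exp ((p - m - 2 * e)\<^sup>2 / 2) \<and> K * e \<le> p - m - e"

lemma admissible_if_le_B_K:
  assumes "0 \<le> e" "e \<le> (p - m) / 2" "K \<le> B_K m p e"
  shows "admissible e"
proof (cases "e = 0")
  case True
  then show ?thesis using assms means_less unfolding admissible_def B_K_def by simp
next
  case False
  then have "0 < e" and "K + 1 \<le> (p - m) / e" and "K \<le> exp ((p - m - 2 * e)\<^sup>2 / 2)"
    using assms unfolding B_K_def by auto
  then show ?thesis
    using assms unfolding admissible_def by (simp add: le_divide_eq algebra_simps)
qed

lemma admissible_0:
  assumes "admissible e"
  shows "admissible 0"
proof -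
  have "(p - m - 2 * e)\<^sup>2 \<le> (p - m)\<^sup>2"
    by (rule power_mono) (use assms in \<open>auto simp: admissible_def\<close>)
  then have "K \<le> exp ((p - m)\<^sup>2 / 2)"
    using assms unfolding admissible_def by (meson divide_right_mono exp_le_cancel_iff order_trans zero_le_numeral)
  then show ?thesis using means_less unfolding admissible_def by simp
qed

lemma R_rob_eq_risk: "R_rob m p K e = risk e"
  by (rule ext) (simp add: R_rob_def risk_def law_pos_def law_neg_def K_pos
      measure_normal_atMost measure_normal_greaterThan algebra_simps)

lemma R_nat_eq_risk_0: "R_nat m p K = risk 0"
  by (rule ext) (simp add: R_nat_def e_pos_def e_neg_def risk_def law_pos_def law_neg_def K_pos
      measure_normal_atMost measure_normal_greaterThan algebra_simps)

lemma risk_has_real_derivative: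
  "(risk e has_real_derivative
     (std_normal_density ((t + e - p) / K) / K - std_normal_density (m + e - t)) / 2) (at t)"
proof -
  have "((\<lambda>t. std_normal_cdf ((t + e - p) / K)) has_real_derivative
          std_normal_density ((t + e - p) / K) * (1 / K)) (at t)"
    by (rule DERIV_chain2[OF std_normal_cdf_has_real_derivative])
       (use K_pos in \<open>auto intro!: derivative_eq_intros\<close>)
  moreover have "((\<lambda>t. std_normal_cdf (m + e - t)) has_real_derivative
          std_normal_density (m + e - t) * (-1)) (at t)"
    by (rule DERIV_chain2[OF std_normal_cdf_has_real_derivative])
       (auto intro!: derivative_eq_intros)
  ultimately show ?thesis
    unfolding risk_def[abs_def] by (auto intro!: derivative_eq_intros simp: field_simps)
qed

lemma continuous_on_risk: "continuous_on S (risk e)"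
  by (meson DERIV_isCont risk_has_real_derivative continuous_at_imp_continuous_on)

lemma sgn_risk_slope:
  "sgn (std_normal_density ((t + e - p) / K) / K - std_normal_density (m + e - t))
     = sgn (log_ratio e t)"
proof -
  define X where "X = - (t + e - p)\<^sup>2 / (2 * K\<^sup>2) - ln K"
  define Y where "Y = - (m + e - t)\<^sup>2 / 2"
  have "std_normal_density ((t + e - p) / K) / K = exp X / sqrt (2 * pi)"
    unfolding std_normal_density_def X_def using K_pos by (simp add: exp_diff power_divide mult_ac)
  moreover have "std_normal_density (m + e - t) = exp Y / sqrt (2 * pi)"
    unfolding std_normal_density_def Y_def by simp
  ultimately have "sgn (std_normal_density ((t + e - p) / K) / K - std_normal_density (m + e - t))
      = sgn (exp X - exp Y)"
    by (simp add: diff_divide_distrib[symmetric])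
  also have "\<dots> = sgn (X - Y)"
    by (cases X Y rule: linorder_cases) auto
  also have "\<dots> = sgn (log_ratio e t)"
  proof -
    have "log_ratio e t = 2 * (X - Y)"
      unfolding log_ratio_def X_def Y_def using K_pos by (simp add: field_simps power2_eq_square)
    then show ?thesis by (simp only: sgn_mult) simp
  qed
  finally show ?thesis .
qed

lemma risk_strict_mono_if_log_ratio_pos:
  assumes "s < t" "\<And>x. s < x \<Longrightarrow> x < t \<Longrightarrow> 0 < log_ratio e x"
  shows "risk e s < risk e t"
proof (rule DERIV_pos_imp_increasing_open[OF assms(1) _ continuous_on_risk])
  fix x assume "s < x" "x < t"
  then show "\<exists>y. (risk e has_real_derivative y) (at x) \<and> 0 < y"
    using risk_has_real_derivative sgn_risk_slope[of x e] assms(2)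
    by (metis sgn_greater half_gt_zero_iff)
qed

lemma risk_strict_antimono_if_log_ratio_neg:
  assumes "s < t" "\<And>x. s < x \<Longrightarrow> x < t \<Longrightarrow> log_ratio e x < 0"
  shows "risk e t < risk e s"
proof (rule DERIV_neg_imp_decreasing_open[OF assms(1) _ continuous_on_risk])
  fix x assume "s < x" "x < t"
  then show "\<exists>y. (risk e has_real_derivative y) (at x) \<and> y < 0"
    using risk_has_real_derivative sgn_risk_slope[of x e] assms(2)
    by (metis sgn_less divide_less_0_iff zero_less_numeral)
qed

lemma isCont_log_ratio: "isCont (log_ratio e) x"
  unfolding log_ratio_def using K_pos by (intro continuous_intros) auto

lemma log_ratio_neg_left:
  assumes "admissible e" and "m \<le> t" "t \<le> m + e"
  shows "log_ratio e t < 0"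
proof -
  have "K * (e - (t - m)) \<le> p - e - t"
  proof -
    have "t - m \<le> K * (t - m)"
      using K_gt_1 assms(2) by (simp add: mult_le_cancel_right1)
    then show ?thesis
      using assms(1) unfolding admissible_def by (simp add: algebra_simps)
  qed
  then have "e - (t - m) \<le> (p - e - t) / K"
    using K_pos by (simp add: pos_le_divide_eq mult.commute)
  then have "(t - e - m)\<^sup>2 \<le> ((p - e - t) / K)\<^sup>2"
    using power_mono[of "e - (t - m)" "(p - e - t) / K" 2] assms(3)
    by (simp add: power2_commute algebra_simps)
  then show ?thesis
    unfolding log_ratio_def using ln_K_pos by (simp add: power_divide power2_commute algebra_simps)
qed

lemma log_ratio_strict_mono_middle:
  assumes "m + e \<le> t1" "t1 < t2" "t2 \<le> p - e"
  shows "log_ratio e t1 < log_ratio e t2"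
proof -
  have "(t1 - e - m)\<^sup>2 < (t2 - e - m)\<^sup>2"
    by (rule power_strict_mono) (use assms in auto)
  moreover have "(p - e - t2)\<^sup>2 \<le> (p - e - t1)\<^sup>2"
    by (rule power_mono) (use assms in auto)
  then have "(t2 + e - p)\<^sup>2 / K\<^sup>2 \<le> (t1 + e - p)\<^sup>2 / K\<^sup>2"
    by (intro divide_right_mono) (auto simp: power2_commute algebra_simps)
  ultimately show ?thesis
    unfolding log_ratio_def by linarith
qed

text \<open>For \<open>t = p - e + s\<close> the first square is at least \<open>(p - m - 2e)\<^sup>2 + s\<^sup>2\<close>, which covers
  both \<open>2 ln K\<close> and \<open>(s/K)\<^sup>2\<close>.\<close>
lemma log_ratio_pos_right:
  assumes "admissible e" and "p - e \<le> t"
  shows "0 \<le> log_ratio e t" and "p - e < t \<Longrightarrow> 0 < log_ratio e t"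
proof -
  define s where "s = t - (p - e)"
  define d where "d = p - m - 2 * e"
  have "0 \<le> s" "0 \<le> d"
    using assms unfolding s_def d_def admissible_def by auto
  have "ln K \<le> d\<^sup>2 / 2"
    using assms(1) K_pos unfolding admissible_def d_def by (metis ln_exp ln_le_cancel_iff exp_gt_zero)
  have "1 < K\<^sup>2"
    using K_gt_1 by (simp add: one_less_power)
  then have "s\<^sup>2 \<le> s\<^sup>2 * K\<^sup>2" and "0 < s \<Longrightarrow> s\<^sup>2 < s\<^sup>2 * K\<^sup>2"
    using mult_left_mono[of 1 "K\<^sup>2" "s\<^sup>2"] mult_strict_left_mono[of 1 "K\<^sup>2" "s\<^sup>2"] by simp_all
  then have "s\<^sup>2 / K\<^sup>2 \<le> s\<^sup>2" and "0 < s \<Longrightarrow> s\<^sup>2 / K\<^sup>2 < s\<^sup>2"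
    using K_pos by (simp_all add: divide_le_eq divide_less_eq)
  moreover have "d\<^sup>2 + s\<^sup>2 \<le> (d + s)\<^sup>2"
    using \<open>0 \<le> s\<close> \<open>0 \<le> d\<close> by (simp add: power2_sum)
  moreover have "log_ratio e t = (d + s)\<^sup>2 - s\<^sup>2 / K\<^sup>2 - 2 * ln K"
    unfolding log_ratio_def s_def d_def by (simp add: algebra_simps)
  ultimately show "0 \<le> log_ratio e t" and "p - e < t \<Longrightarrow> 0 < log_ratio e t"
    using \<open>ln K \<le> d\<^sup>2 / 2\<close> unfolding s_def by linarith+
qed

lemma log_ratio_single_crossing:
  assumes "admissible e" and "m \<le> t1" "t1 < t2" "0 \<le> log_ratio e t1"
  shows "0 < log_ratio e t2"
proof (cases "p - e < t2")
  case True
  then show ?thesis using log_ratio_pos_right(2)[OF assms(1)] by simp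
next
  case False
  have "m + e < t1"
    using log_ratio_neg_left[OF assms(1,2)] assms(4) by fastforce
  then have "log_ratio e t1 < log_ratio e t2"
    using log_ratio_strict_mono_middle False assms(3) by simp
  then show ?thesis using assms(4) by simp
qed

lemma log_ratio_root_exists:
  assumes "admissible e"
  obtains r where "r \<in> {m..p}" "log_ratio e r = 0"
proof -
  have "log_ratio e m < 0"
    using log_ratio_neg_left[OF assms] assms unfolding admissible_def by simp
  moreover have "0 \<le> log_ratio e p"
    using log_ratio_pos_right(1)[OF assms] assms unfolding admissible_def by simp
  ultimately obtain r where "m \<le> r" "r \<le> p" "log_ratio e r = 0"
    using IVT[of "log_ratio e" m 0 p] means_less isCont_log_ratio by fastforce
  then show ?thesis using that by simp
qed

lemma risk_strict_min_at_root:
  assumes "admissible e" and "r \<in> {m..p}" "log_ratio e r = 0" and "x \<in> {m..p}" "x \<noteq> r"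
  shows "risk e r < risk e x"
proof (cases "x < r")
  case True
  have "log_ratio e y < 0" if "x < y" "y < r" for y
    using log_ratio_single_crossing[OF assms(1), of y r] that assms by fastforce
  then show ?thesis
    using risk_strict_antimono_if_log_ratio_neg[OF True] by blast
next
  case False
  then have "r < x" using assms(5) by simp
  moreover have "0 < log_ratio e y" if "r < y" for y
    using log_ratio_single_crossing[OF assms(1), of r y] that assms by simp
  ultimately show ?thesis
    using risk_strict_mono_if_log_ratio_pos by blast
qed

lemma minimizer_iff_log_ratio_root:
  assumes "admissible e"
  shows "is_minimizer_on (risk e) {m..p} t \<longleftrightarrow> t \<in> {m..p} \<and> log_ratio e t = 0"
proof
  assume min: "is_minimizer_on (risk e) {m..p} t"
  obtain r where r: "r \<in> {m..p}" "log_ratio e r = 0"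
    using log_ratio_root_exists[OF assms] .
  have "t = r"
    using risk_strict_min_at_root[OF assms r, of t] min r unfolding is_minimizer_on_def by force
  then show "t \<in> {m..p} \<and> log_ratio e t = 0" using r by simp
next
  assume "t \<in> {m..p} \<and> log_ratio e t = 0"
  then show "is_minimizer_on (risk e) {m..p} t"
    using risk_strict_min_at_root[OF assms] unfolding is_minimizer_on_def
    by (metis order.order_iff_strict)
qed

lemma minimizer_unique:
  assumes "admissible e" "is_minimizer_on (risk e) {m..p} t" "is_minimizer_on (risk e) {m..p} t'"
  shows "t = t'"
proof (rule ccontr)
  assume "t \<noteq> t'"
  have "t \<in> {m..p}" "log_ratio e t = 0" "t' \<in> {m..p}"
    using assms minimizer_iff_log_ratio_root by auto
  then have "risk e t < risk e t'"
    using risk_strict_min_at_root[OF assms(1)] \<open>t \<noteq> t'\<close> by blast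
  moreover have "risk e t' \<le> risk e t"
    using assms(3) \<open>t \<in> {m..p}\<close> unfolding is_minimizer_on_def by blast
  ultimately show False by simp
qed

lemma minimizer_bounds:
  assumes "admissible e" "is_minimizer_on (risk e) {m..p} t"
  shows "m + e \<le> t" "t \<le> p - e"
proof -
  have "t \<in> {m..p}" "log_ratio e t = 0"
    using assms minimizer_iff_log_ratio_root by auto
  then show "m + e \<le> t" "t \<le> p - e"
    using log_ratio_neg_left[OF assms(1), of t] log_ratio_pos_right(2)[OF assms(1), of t] by force+
qed

lemma less_minimizer_if_log_ratio_neg:
  assumes "admissible e" "is_minimizer_on (risk e) {m..p} t" "q \<in> {m..p}" "log_ratio e q < 0"
  shows "q < t"
proof -
  have "t \<in> {m..p}" "log_ratio e t = 0"
    using assms minimizer_iff_log_ratio_root by auto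
  then have "\<not> t < q"
    using log_ratio_single_crossing[OF assms(1), of t q] assms(4) by auto
  moreover have "t \<noteq> q"
    using \<open>log_ratio e t = 0\<close> assms(4) by auto
  ultimately show ?thesis by simp
qed

lemma minimizer_less_if_log_ratio_pos:
  assumes "admissible e" "is_minimizer_on (risk e) {m..p} t" "q \<in> {m..p}" "0 < log_ratio e q"
  shows "t < q"
proof -
  have "log_ratio e t = 0"
    using assms minimizer_iff_log_ratio_root by auto
  then have "\<not> q < t"
    using log_ratio_single_crossing[OF assms(1), of q t] assms(3,4) by auto
  moreover have "t \<noteq> q"
    using \<open>log_ratio e t = 0\<close> assms(4) by auto
  ultimately show ?thesis by simp
qed

lemma minimizer_strict_mono:
  assumes "admissible e1" "admissible e2" "e1 < e2"
    and "is_minimizer_on (risk e1) {m..p} t1" "is_minimizer_on (risk e2) {m..p} t2"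
  shows "t1 < t2"
proof -
  define a where "a = t2 - e2 - m"
  define b where "b = p - e2 - t2"
  define \<delta> where "\<delta> = e2 - e1"
  have "t2 \<in> {m..p}" "log_ratio e2 t2 = 0"
    using assms(2,5) minimizer_iff_log_ratio_root by auto
  have "0 \<le> a" "0 \<le> b" "0 < \<delta>"
    using minimizer_bounds[OF assms(2,5)] assms(3) unfolding a_def b_def \<delta>_def by auto
  have root: "a\<^sup>2 - b\<^sup>2 / K\<^sup>2 = 2 * ln K"
    using \<open>log_ratio e2 t2 = 0\<close> unfolding log_ratio_def a_def b_def
    by (simp add: power2_commute algebra_simps)
  then have "(b / K)\<^sup>2 < a\<^sup>2"
    using ln_K_pos by (simp add: power_divide)
  then have "b / K < a"
    using \<open>0 \<le> a\<close> by (rule power_less_imp_less_base)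
  moreover have "b / K\<^sup>2 \<le> b / K"
    using \<open>0 \<le> b\<close> K_gt_1 by (simp add: frac_le power2_eq_square)
  ultimately have "0 < 2 * \<delta> * (a - b / K\<^sup>2)"
    using \<open>0 < \<delta>\<close> by simp
  moreover have "\<delta>\<^sup>2 / K\<^sup>2 < \<delta>\<^sup>2"
  proof -
    have "\<delta>\<^sup>2 * 1 < \<delta>\<^sup>2 * K\<^sup>2"
      using \<open>0 < \<delta>\<close> K_gt_1 by (intro mult_strict_left_mono) (simp_all add: one_less_power)
    then show ?thesis using K_pos by (simp add: divide_less_eq)
  qed
  moreover have "log_ratio e1 t2 = (a + \<delta>)\<^sup>2 - (b + \<delta>)\<^sup>2 / K\<^sup>2 - 2 * ln K"
    unfolding log_ratio_def a_def b_def \<delta>_def by (simp add: power2_commute algebra_simps)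
  then have "log_ratio e1 t2 = 2 * \<delta> * (a - b / K\<^sup>2) + (\<delta>\<^sup>2 - \<delta>\<^sup>2 / K\<^sup>2)"
    using root by (simp add: power2_sum add_divide_distrib diff_divide_distrib algebra_simps)
  ultimately have "0 < log_ratio e1 t2"
    by linarith
  then show ?thesis
    using minimizer_less_if_log_ratio_pos[OF assms(1,4) \<open>t2 \<in> {m..p}\<close>] by simp
qed

lemma equal_error_rates_iff: "e_pos p K t = e_neg m t \<longleftrightarrow> t - p = K * (m - t)"
proof -
  have "e_pos p K t = e_neg m t \<longleftrightarrow> (t - p) / K = m - t"
    unfolding e_pos_def e_neg_def law_pos_def law_neg_def
    using strict_mono_eq[OF std_normal_cdf_strict_mono] K_pos
    by (simp add: measure_normal_atMost measure_normal_greaterThan)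
  also have "\<dots> \<longleftrightarrow> t - p = K * (m - t)"
    using K_pos by (simp add: divide_eq_eq mult.commute)
  finally show ?thesis .
qed

lemma equal_error_threshold_bounds:
  assumes "admissible e" and "t - p = K * (m - t)"
  shows "m + e \<le> t" and "log_ratio 0 t < 0"
proof -
  have "e * (1 + K) \<le> (t - m) * (1 + K)"
    using assms unfolding admissible_def by (simp add: algebra_simps)
  then show "m + e \<le> t"
    using K_pos by (simp add: mult_le_cancel_right)
  have "(t - p) / K = m - t"
    using assms(2) K_pos by simp
  have "log_ratio 0 t = (t - m)\<^sup>2 - ((t - p) / K)\<^sup>2 - 2 * ln K"
    unfolding log_ratio_def by (simp add: power_divide)
  also have "\<dots> = - 2 * ln K"
    using \<open>(t - p) / K = m - t\<close> by (simp add: power2_commute)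
  finally show "log_ratio 0 t < 0"
    using ln_K_pos by simp
qed

lemma minimizer_mono:
  assumes "admissible e1" "admissible e2" "e1 \<le> e2"
    and "is_minimizer_on (risk e1) {m..p} t1" "is_minimizer_on (risk e2) {m..p} t2"
  shows "t1 \<le> t2"
proof (cases "e1 = e2")
  case True
  then show ?thesis
    using minimizer_unique[OF assms(1,4)] assms(5) by simp
next
  case False
  then show ?thesis
    using minimizer_strict_mono[OF assms(1,2) _ assms(4,5)] assms(3) by simp
qed

lemma thresholds_ordered:
  assumes "admissible e" and "t\<^sub>f \<in> {m..p}" "e_pos p K t\<^sub>f = e_neg m t\<^sub>f"
    and "is_minimizer_on (risk 0) {m..p} t\<^sub>s" "is_minimizer_on (risk e) {m..p} t\<^sub>r"
  shows "m + e \<le> t\<^sub>f" "t\<^sub>f \<le> t\<^sub>s" "t\<^sub>s \<le> t\<^sub>r" "t\<^sub>r \<le> p - e"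
proof -
  have "t\<^sub>f - p = K * (m - t\<^sub>f)"
    using assms(3) equal_error_rates_iff by simp
  note fair = equal_error_threshold_bounds[OF assms(1) this]
  then show "m + e \<le> t\<^sub>f" by simp
  show "t\<^sub>f \<le> t\<^sub>s"
    using less_minimizer_if_log_ratio_neg[OF admissible_0[OF assms(1)] assms(4,2) fair(2)] by simp
  show "t\<^sub>s \<le> t\<^sub>r"
    using minimizer_mono[OF admissible_0[OF assms(1)] assms(1) _ assms(4,5)] assms(1)
    unfolding admissible_def by simp
  show "t\<^sub>r \<le> p - e"
    using minimizer_bounds(2)[OF assms(1,5)] .
qed

end

theorem theorem6p1:
  fixes mu_m mu_p K :: real
  assumes "mu_m < mu_p" and "1 < K"
  shows "(\<forall>eps theta_f theta_s theta_r.
            0 \<le> eps \<and> eps \<le> (mu_p - mu_m) / 2 \<and> K \<le> B_K mu_m mu_p eps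
            \<and> theta_f \<in> {mu_m..mu_p} \<and> e_pos mu_p K theta_f = e_neg mu_m theta_f
            \<and> is_minimizer_on (R_nat mu_m mu_p K) {mu_m..mu_p} theta_s
            \<and> is_minimizer_on (R_rob mu_m mu_p K eps) {mu_m..mu_p} theta_r
            \<longrightarrow> mu_m + eps \<le> theta_f \<and> theta_f \<le> theta_s \<and> theta_s \<le> theta_r
                \<and> theta_r \<le> mu_p - eps)
       \<and> (\<forall>eps1 eps2 t1 t2.
            0 \<le> eps1 \<and> eps1 \<le> (mu_p - mu_m) / 2 \<and> K \<le> B_K mu_m mu_p eps1
            \<and> 0 \<le> eps2 \<and> eps2 \<le> (mu_p - mu_m) / 2 \<and> K \<le> B_K mu_m mu_p eps2
            \<and> eps1 < eps2
            \<and> is_minimizer_on (R_rob mu_m mu_p K eps1) {mu_m..mu_p} t1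
            \<and> is_minimizer_on (R_rob mu_m mu_p K eps2) {mu_m..mu_p} t2
            \<longrightarrow> t1 < t2)"
proof -
  interpret gaussian_mixture mu_m mu_p K
    using assms by unfold_locales
  show ?thesis
    unfolding R_nat_eq_risk_0 R_rob_eq_risk
    by (intro conjI allI impI; elim conjE)
       (rule thresholds_ordered[OF admissible_if_le_B_K]
          minimizer_strict_mono[OF admissible_if_le_B_K admissible_if_le_B_K]; assumption)+
qed

end
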